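(* Let $\tau$ be any substitution whose ll and rl graphs are subfixed, and let $W=\{u\in\mathcal{A}^2 : \exists a\in\mathcal{A},\ u \text{ is a factor of } \tau(a)\}$. Then \[\mathcal{L}_2(\tau)=W\cup\{\mathrm{rl}(\tau(a))\,\mathrm{ll}(\tau(b)) : ab\in W\},\] where for a nonempty word $z$, $\mathrm{ll}(z)$ and $\mathrm{rl}(z)$ denote its leftmost and rightmost letter.
   Context: Let $\mathcal{A}$ be a finite nonempty alphabet, $\mathcal{A}^2$ the set of words of length $2$. A word $u$ is a factor of $v$ if $v=w_1uw_2$ for some words $w_1,w_2$. A substitution is a map $\tau:\mathcal{A}\to\mathcal{A}^+$ (nonempty words), extended to a concatenation-respecting map on words. The language $\mathcal{L}(\tau)$ is the set of words that are factors of $\tau^n(a)$ for some letter $a$ and some $n\ge1$, and $\mathcal{L}_2(\tau)$ is its set of words of length $2$. The ll graph (resp. rl graph) is the directed graph on vertex set $\mathcal{A}$ with exactly one edge from each letter $a$ to the leftmost (resp. rightmost) letter of $\tau(a)$. Such a graph is subfixed if for every vertex $x$, either the edge leaving $x$ goes to $x$, or it goes to a vertex $y$ whose outgoing edge goes to $y$ itself. *)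

theory Defs
  imports Main
begin

text \<open>Words over the alphabet 'a are lists; a substitution is a map
  tau :: 'a => 'a list with nonempty images, extended to words by concatenation.\<close>

definition is_factor :: "'a list \<Rightarrow> 'a list \<Rightarrow> bool" where
  "is_factor u v \<longleftrightarrow> (\<exists>w1 w2. v = w1 @ u @ w2)"

definition subst_word :: "('a \<Rightarrow> 'a list) \<Rightarrow> 'a list \<Rightarrow> 'a list" where
  "subst_word \<tau> w = concat (map \<tau> w)"

definition language :: "('a \<Rightarrow> 'a list) \<Rightarrow> 'a list set" where
  "language \<tau> = {u. \<exists>a n. n \<ge> 1 \<and> is_factor u ((subst_word \<tau> ^^ n) [a])}"

definition language2 :: "('a \<Rightarrow> 'a list) \<Rightarrow> 'a list set" where
  "language2 \<tau> = {u \<in> language \<tau>. length u = 2}"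

definition ll_graph :: "('a \<Rightarrow> 'a list) \<Rightarrow> 'a \<Rightarrow> 'a" where
  "ll_graph \<tau> a = hd (\<tau> a)"

definition rl_graph :: "('a \<Rightarrow> 'a list) \<Rightarrow> 'a \<Rightarrow> 'a" where
  "rl_graph \<tau> a = last (\<tau> a)"

text \<open>A functional graph (one outgoing edge per vertex, given by g) is subfixed.\<close>
definition subfixed :: "('a \<Rightarrow> 'a) \<Rightarrow> bool" where
  "subfixed g \<longleftrightarrow> (\<forall>x. g x = x \<or> g (g x) = g x)"

end

theory Submission
  imports Defs
begin

text \<open>A length-2 factor of \<open>\<tau>(w)\<close> lies either inside some \<open>\<tau>(x)\<close> with \<open>x\<close> in \<open>w\<close>, or
  across the junction of \<open>\<tau>(x)\<close> and \<open>\<tau>(y)\<close> for a length-2 factor \<open>xy\<close> of \<open>w\<close>, where it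
  is \<open>rl(\<tau>(x)) ll(\<tau>(y))\<close>. Iterating, the length-2 words of the language are those of
  \<open>W\<close> together with the junction words of \<open>W\<close>, of junction words of \<open>W\<close>, and so on.
  Subfixedness makes \<open>ll \<circ> \<tau>\<close> and \<open>rl \<circ> \<tau>\<close> idempotent, so taking junction words
  twice gives nothing new and the iteration stops after one step.\<close>

lemma subfixed_idem: "subfixed g \<Longrightarrow> g (g x) = g x"
  unfolding subfixed_def by metis

definition factors2 :: "'a list \<Rightarrow> 'a list set" where
  "factors2 w = {u. length u = 2 \<and> is_factor u w}"

lemma is_factor_Cons:
  "is_factor u (x # w) \<longleftrightarrow> (\<exists>v w'. u = x # v \<and> w = v @ w') \<or> is_factor u w"
  unfolding is_factor_def by (auto simp: Cons_eq_append_conv) (metis append_Nil)+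

lemma factors2_Nil [simp]: "factors2 [] = {}"
  by (auto simp: factors2_def is_factor_def)

lemma factors2_singleton [simp]: "factors2 [x] = {}"
  by (auto simp: factors2_def is_factor_def dest!: arg_cong[where f = length])

lemma factors2_Cons_Cons [simp]: "factors2 (x # y # w) = insert [x, y] (factors2 (y # w))"
  by (auto simp: factors2_def is_factor_Cons length_Suc_conv numeral_2_eq_2 Cons_eq_append_conv)

lemma factors2_append:
  "xs \<noteq> [] \<Longrightarrow> ys \<noteq> [] \<Longrightarrow>
    factors2 (xs @ ys) = insert [last xs, hd ys] (factors2 xs \<union> factors2 ys)"
proof (induction xs rule: induct_list012)
  case (2 x)
  then show ?case by (cases ys) auto
next
  case (3 x x' xs)
  then show ?case by auto
qed simp

definition junction_words :: "('a \<Rightarrow> 'a list) \<Rightarrow> 'a list set \<Rightarrow> 'a list set" where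
  "junction_words \<tau> X = {[last (\<tau> a), hd (\<tau> b)] | a b. [a, b] \<in> X}"

lemma junction_words_mono: "X \<subseteq> Y \<Longrightarrow> junction_words \<tau> X \<subseteq> junction_words \<tau> Y"
  unfolding junction_words_def by blast

lemma junction_words_Un: "junction_words \<tau> (X \<union> Y) = junction_words \<tau> X \<union> junction_words \<tau> Y"
  unfolding junction_words_def by blast

lemma junction_words_insert [simp]:
  "junction_words \<tau> (insert [a, b] X) = insert [last (\<tau> a), hd (\<tau> b)] (junction_words \<tau> X)"
  unfolding junction_words_def by blast

lemma junction_words_empty [simp]: "junction_words \<tau> {} = {}"
  unfolding junction_words_def by blast

lemma junction_words_idem:
  assumes "subfixed (ll_graph \<tau>)" and "subfixed (rl_graph \<tau>)"
  shows "junction_words \<tau> (junction_words \<tau> X) = junction_words \<tau> X"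
proof -
  have "hd (\<tau> (hd (\<tau> b))) = hd (\<tau> b)" and "last (\<tau> (last (\<tau> a))) = last (\<tau> a)" for a b
    using subfixed_idem[OF assms(1), of b] subfixed_idem[OF assms(2), of a]
    by (simp_all add: ll_graph_def rl_graph_def)
  then show ?thesis
    unfolding junction_words_def by (auto; metis)
qed

lemma subst_word_Nil [simp]: "subst_word \<tau> [] = []"
  by (simp add: subst_word_def)

lemma subst_word_Cons [simp]: "subst_word \<tau> (x # w) = \<tau> x @ subst_word \<tau> w"
  by (simp add: subst_word_def)

lemma subst_word_singleton [simp]: "subst_word \<tau> [a] = \<tau> a"
  by (simp add: subst_word_def)

lemma factors2_subst_word:
  assumes nonempty: "\<And>a. \<tau> a \<noteq> []"
  shows "factors2 (subst_word \<tau> w) =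
    (\<Union>x\<in>set w. factors2 (\<tau> x)) \<union> junction_words \<tau> (factors2 w)"
proof (induction w rule: induct_list012)

  case (3 x y w)
  have "factors2 (subst_word \<tau> (x # y # w)) =
      insert [last (\<tau> x), hd (\<tau> y)] (factors2 (\<tau> x) \<union> factors2 (subst_word \<tau> (y # w)))"
    using factors2_append[of "\<tau> x" "subst_word \<tau> (y # w)"] nonempty by simp
  then show ?case
    using "3.IH"(2) by auto
qed simp_all

lemma language2_iff:
  "u \<in> language2 \<tau> \<longleftrightarrow> (\<exists>c n. n \<ge> 1 \<and> u \<in> factors2 ((subst_word \<tau> ^^ n) [c]))"
  unfolding language2_def language_def factors2_def by blast

lemma factors2_iterate_subset:
  assumes nonempty: "\<And>a. \<tau> a \<noteq> []"
    and "subfixed (ll_graph \<tau>)" and "subfixed (rl_graph \<tau>)"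
  defines "W \<equiv> \<Union>a. factors2 (\<tau> a)"
  shows "factors2 ((subst_word \<tau> ^^ n) [c]) \<subseteq> W \<union> junction_words \<tau> W"
proof (induction n)
  case (Suc n)
  let ?w = "(subst_word \<tau> ^^ n) [c]"
  have "factors2 ((subst_word \<tau> ^^ Suc n) [c]) \<subseteq> W \<union> junction_words \<tau> (factors2 ?w)"
    using factors2_subst_word[OF nonempty, where w = ?w] by (auto simp: W_def)
  also have "\<dots> \<subseteq> W \<union> junction_words \<tau> (W \<union> junction_words \<tau> W)"
    using junction_words_mono[OF Suc.IH] by blast
  also have "\<dots> = W \<union> junction_words \<tau> W"
    by (auto simp: junction_words_Un junction_words_idem assms)
  finally show ?case .
qed simp

lemma language2_eq:
  assumes nonempty: "\<And>a. \<tau> a \<noteq> []"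
    and "subfixed (ll_graph \<tau>)" and "subfixed (rl_graph \<tau>)"
  defines "W \<equiv> \<Union>a. factors2 (\<tau> a)"
  shows "language2 \<tau> = W \<union> junction_words \<tau> W"
proof
  show "language2 \<tau> \<subseteq> W \<union> junction_words \<tau> W"
    using factors2_iterate_subset[OF assms(1-3)] unfolding subset_iff language2_iff W_def by blast
  have "factors2 (\<tau> c) \<subseteq> language2 \<tau>" for c
  proof -
    have "factors2 (\<tau> c) = factors2 ((subst_word \<tau> ^^ 1) [c])"
      by simp
    then show ?thesis
      using language2_iff[of _ \<tau>] by (metis order_refl subsetI)
  qed
  moreover have "junction_words \<tau> (factors2 (\<tau> c)) \<subseteq> language2 \<tau>" for c
  proof -
    have "junction_words \<tau> (factors2 (\<tau> c)) \<subseteq> factors2 ((subst_word \<tau> ^^ 2) [c])"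
      using factors2_subst_word[OF nonempty, where w = "\<tau> c"] by (simp add: numeral_2_eq_2)
    then show ?thesis
      using language2_iff[of _ \<tau>] by (metis one_le_numeral subsetD subsetI)
  qed
  ultimately show "W \<union> junction_words \<tau> W \<subseteq> language2 \<tau>"
    unfolding W_def junction_words_def by blast
qed

theorem mainTheorem12:
  fixes \<tau> :: "'a::finite \<Rightarrow> 'a list"
  assumes nonempty: "\<And>a. \<tau> a \<noteq> []"
    and ll_sub: "subfixed (ll_graph \<tau>)"
    and rl_sub: "subfixed (rl_graph \<tau>)"
  defines "W \<equiv> {u. length u = 2 \<and> (\<exists>a. is_factor u (\<tau> a))}"
  shows "language2 \<tau> = W \<union> {[last (\<tau> a), hd (\<tau> b)] | a b. [a, b] \<in> W}"
proof -
  have "W = (\<Union>a. factors2 (\<tau> a))"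
    unfolding W_def factors2_def by blast
  then show ?thesis
    using language2_eq[OF nonempty ll_sub rl_sub] unfolding junction_words_def by simp
qed

end
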